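(* If $L$ is a regular language, then ${\rm pssr}(L)$ is context-free.
   Context: For words $x=a_1\cdots a_n$, $y=b_1\cdots b_n$ of the same length, the perfect shuffle is $x\,\text{sh}\,y=a_1b_1a_2b_2\cdots a_nb_n$. $x^R$ denotes the reversal of $x$. For a language $L$, ${\rm pssr}(L)=\{x\,\text{sh}\,x^R : x\in L\}$. *)

theory Defs
  imports Main
begin

datatype 'a rexp = Zero | One | Atom 'a | Plus "'a rexp" "'a rexp"
  | Times "'a rexp" "'a rexp" | Star "'a rexp"

definition conc :: "'a list set \<Rightarrow> 'a list set \<Rightarrow> 'a list set" where
  "conc A B = {u @ v | u v. u \<in> A \<and> v \<in> B}"

inductive_set kleene_star :: "'a list set \<Rightarrow> 'a list set" for A where
  star_Nil: "[] \<in> kleene_star A"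
| star_app: "u \<in> A \<Longrightarrow> v \<in> kleene_star A \<Longrightarrow> u @ v \<in> kleene_star A"

fun lang :: "'a rexp \<Rightarrow> 'a list set" where
  "lang Zero = {}"
| "lang One = {[]}"
| "lang (Atom a) = {[a]}"
| "lang (Plus r s) = lang r \<union> lang s"
| "lang (Times r s) = conc (lang r) (lang s)"
| "lang (Star r) = kleene_star (lang r)"

definition regular :: "'a list set \<Rightarrow> bool" where
  "regular L \<longleftrightarrow> (\<exists>r. lang r = L)"

text \<open>Nonterminals are natural numbers; a symbol is either a nonterminal (Inl)
  or a terminal (Inr). A grammar is a finite set of productions with a start symbol.\<close>

type_synonym 'a prod = "nat \<times> (nat + 'a) list"

inductive derives1 :: "'a prod set \<Rightarrow> (nat + 'a) list \<Rightarrow> (nat + 'a) list \<Rightarrow> bool"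
  for P where
  "(A, \<alpha>) \<in> P \<Longrightarrow> derives1 P (u @ [Inl A] @ v) (u @ \<alpha> @ v)"

definition derives :: "'a prod set \<Rightarrow> (nat + 'a) list \<Rightarrow> (nat + 'a) list \<Rightarrow> bool" where
  "derives P = (derives1 P)\<^sup>*\<^sup>*"

definition cfg_lang :: "'a prod set \<Rightarrow> nat \<Rightarrow> 'a list set" where
  "cfg_lang P S = {w. derives P [Inl S] (map Inr w)}"

definition context_free :: "'a list set \<Rightarrow> bool" where
  "context_free L \<longleftrightarrow> (\<exists>P S. finite P \<and> cfg_lang P S = L)"

fun perfect_shuffle :: "'a list \<Rightarrow> 'a list \<Rightarrow> 'a list" where
  "perfect_shuffle (a # xs) (b # ys) = a # b # perfect_shuffle xs ys"
| "perfect_shuffle _ _ = []"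

definition pssr :: "'a list set \<Rightarrow> 'a list set" where
  "pssr L = {perfect_shuffle x (rev x) | x. x \<in> L}"

end

theory Submission
  imports Defs
begin

text \<open>
  For x = a # y @ [b] the shuffle of x with its reversal is
  a b (shuffle of y with rev y) b a, so pssr can be generated from the outside in.
  A grammar needs to remember, after having peeled off outer letters, which inner
  words y are still admissible; this is the two-sided quotient {y. u @ y @ v \<in> L}.
  A regular language has only finitely many two-sided quotients, and peeling one more
  pair of letters maps a quotient to a quotient.  Hence the quotients can serve as
  nonterminals, with productions  K \<rightarrow> a b (peel a b K) b a,  and  K \<rightarrow> \<epsilon>  resp.
  K \<rightarrow> a a  when the empty word resp. the word [a] belongs to K.
\<close>

section \<open>Regular languages have finitely many quotients\<close>

lemma star_append:
  "u \<in> kleene_star A \<Longrightarrow> v \<in> kleene_star A \<Longrightarrow> u @ v \<in> kleene_star A"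
  by (induction rule: kleene_star.induct) (auto intro: kleene_star.star_app)

lemma star_single: "u \<in> A \<Longrightarrow> u \<in> kleene_star A"
  using kleene_star.star_app[OF _ kleene_star.star_Nil] by simp

lemma star_append_cases:
  assumes "x \<in> kleene_star A" and "x = w @ y"
  shows "(w \<in> kleene_star A \<and> y \<in> kleene_star A) \<or>
    (\<exists>u v z t. w = u @ v \<and> u \<in> kleene_star A \<and> v \<noteq> [] \<and> v @ z \<in> A \<and>
       t \<in> kleene_star A \<and> y = z @ t)"
  using assms
proof (induction arbitrary: w y rule: kleene_star.induct)
  case star_Nil
  then show ?case by (auto intro: kleene_star.star_Nil)
next
  case (star_app a b)
  from star_app.prems obtain m where "(w = a @ m \<and> m @ y = b) \<or> (w @ m = a \<and> y = m @ b)"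
    by (auto simp: append_eq_append_conv2)
  then show ?case
  proof
    assume split: "w = a @ m \<and> m @ y = b"
    from star_app.IH[of m y] split consider
        "m \<in> kleene_star A" "y \<in> kleene_star A"
      | u v z t where "m = u @ v" "u \<in> kleene_star A" "v \<noteq> []" "v @ z \<in> A"
          "t \<in> kleene_star A" "y = z @ t"
      by blast
    then show ?case
    proof cases
      case 1
      then show ?thesis using split star_app.hyps(1) by (auto intro: kleene_star.star_app)
    next
      case (2 u v z t)
      then have "w = (a @ u) @ v" "a @ u \<in> kleene_star A"
        using split star_app.hyps(1) by (auto intro: kleene_star.star_app)
      then show ?thesis using 2 by blast
    qed
  next
    assume split: "w @ m = a \<and> y = m @ b"
    show ?case
    proof (cases "w = []")
      case True
      then show ?thesis using split star_app.hyps by (auto intro: kleene_star.intros)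
    next
      case False
      have "w = [] @ w" by simp
      then show ?thesis using False split star_app.hyps kleene_star.star_Nil by blast
    qed
  qed
qed

text \<open>Regular languages are closed under reversal; this turns statements about left
  quotients into statements about right quotients.\<close>

lemma rev_conc: "rev ` conc A B = conc (rev ` B) (rev ` A)"
proof
  show "rev ` conc A B \<subseteq> conc (rev ` B) (rev ` A)"
  proof
    fix x assume "x \<in> rev ` conc A B"
    then obtain a b where "x = rev b @ rev a" "a \<in> A" "b \<in> B"
      unfolding conc_def by auto
    then show "x \<in> conc (rev ` B) (rev ` A)" unfolding conc_def by blast
  qed
  show "conc (rev ` B) (rev ` A) \<subseteq> rev ` conc A B"
  proof
    fix x assume "x \<in> conc (rev ` B) (rev ` A)"
    then obtain a b where "x = rev (a @ b)" "a \<in> A" "b \<in> B"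
      unfolding conc_def by auto
    then show "x \<in> rev ` conc A B" unfolding conc_def by blast
  qed
qed

lemma rev_star_subset: "x \<in> kleene_star A \<Longrightarrow> rev x \<in> kleene_star (rev ` A)"
  by (induction rule: kleene_star.induct)
    (auto intro: kleene_star.star_Nil star_append star_single)

lemma rev_star: "rev ` kleene_star A = kleene_star (rev ` A)"
proof
  show "rev ` kleene_star A \<subseteq> kleene_star (rev ` A)"
    using rev_star_subset by blast
  show "kleene_star (rev ` A) \<subseteq> rev ` kleene_star A"
  proof
    fix x assume "x \<in> kleene_star (rev ` A)"
    then have "rev x \<in> kleene_star A"
      using rev_star_subset[of x "rev ` A"] by (simp add: image_image)
    then show "x \<in> rev ` kleene_star A" by (rule rev_image_eqI) simp
  qed
qed

fun rev_rexp :: "'a rexp \<Rightarrow> 'a rexp" where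
  "rev_rexp (Plus r s) = Plus (rev_rexp r) (rev_rexp s)"
| "rev_rexp (Times r s) = Times (rev_rexp s) (rev_rexp r)"
| "rev_rexp (Star r) = Star (rev_rexp r)"
| "rev_rexp r = r"

lemma lang_rev_rexp: "lang (rev_rexp r) = rev ` lang r"
  by (induction r) (auto simp: rev_conc rev_star image_Un)

lemma regular_rev: "regular L \<Longrightarrow> regular (rev ` L)"
  unfolding regular_def using lang_rev_rexp by metis

fun atoms :: "'a rexp \<Rightarrow> 'a set" where
  "atoms (Atom a) = {a}"
| "atoms (Plus r s) = atoms r \<union> atoms s"
| "atoms (Times r s) = atoms r \<union> atoms s"
| "atoms (Star r) = atoms r"
| "atoms r = {}"

lemma set_star_subset:
  "w \<in> kleene_star A \<Longrightarrow> (\<And>u. u \<in> A \<Longrightarrow> set u \<subseteq> X) \<Longrightarrow> set w \<subseteq> X"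
  by (induction rule: kleene_star.induct) auto

lemma set_lang_subset_atoms: "w \<in> lang r \<Longrightarrow> set w \<subseteq> atoms r"
proof (induction r arbitrary: w)
  case (Times r s) then show ?case by (fastforce simp: conc_def)
next
  case (Star r) then show ?case using set_star_subset[of w "lang r" "atoms r"] by auto
qed auto

lemma regular_finite_letters: "regular L \<Longrightarrow> finite (\<Union>x\<in>L. set x)"
proof -
  assume "regular L"
  then obtain r where "lang r = L" unfolding regular_def by blast
  then have "(\<Union>x\<in>L. set x) \<subseteq> atoms r" using set_lang_subset_atoms by blast
  moreover have "finite (atoms r)" by (induction r) auto
  ultimately show ?thesis by (rule finite_subset)
qed

text \<open>The
  quotients of a compound expression are determined by finitely many quotients of
  its parts, which gives finiteness by induction on the expression.\<close>

definition left_quotient :: "'a list \<Rightarrow> 'a list set \<Rightarrow> 'a list set" where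
  "left_quotient w A = {y. w @ y \<in> A}"

lemma left_quotient_Un: "left_quotient w (A \<union> B) = left_quotient w A \<union> left_quotient w B"
  by (auto simp: left_quotient_def)

lemma left_quotient_conc:
  "left_quotient w (conc A B) =
     conc (left_quotient w A) B \<union> \<Union>{left_quotient v B | v. \<exists>u\<in>A. w = u @ v}"
  (is "_ = ?rhs")
proof
  show "left_quotient w (conc A B) \<subseteq> ?rhs"
  proof
    fix y assume "y \<in> left_quotient w (conc A B)"
    then obtain a b where "w @ y = a @ b" "a \<in> A" "b \<in> B"
      by (auto simp: left_quotient_def conc_def)
    then obtain m where "(w = a @ m \<and> m @ y = b) \<or> (w @ m = a \<and> y = m @ b)"
      by (auto simp: append_eq_append_conv2)
    then show "y \<in> ?rhs"
    proof
      assume "w = a @ m \<and> m @ y = b"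
      then have "y \<in> left_quotient m B" "w = a @ m"
        using \<open>b \<in> B\<close> by (auto simp: left_quotient_def)
      then show ?thesis using \<open>a \<in> A\<close> by blast
    next
      assume "w @ m = a \<and> y = m @ b"
      then have "m \<in> left_quotient w A" "y = m @ b"
        using \<open>a \<in> A\<close> by (auto simp: left_quotient_def)
      then show ?thesis using \<open>b \<in> B\<close> unfolding conc_def by blast
    qed
  qed
  show "?rhs \<subseteq> left_quotient w (conc A B)"
    unfolding left_quotient_def conc_def by (auto; metis append.assoc)
qed

lemma left_quotient_star:
  "left_quotient w (kleene_star A) =
     (if w \<in> kleene_star A then kleene_star A else {}) \<union>
     conc (\<Union>{left_quotient v A | v. v \<noteq> [] \<and> (\<exists>u\<in>kleene_star A. w = u @ v)}) (kleene_star A)"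
  (is "?lhs = ?rhs")
proof
  show "?lhs \<subseteq> ?rhs"
  proof
    fix y assume "y \<in> ?lhs"
    then have "w @ y \<in> kleene_star A" by (simp add: left_quotient_def)
    from star_append_cases[OF this refl] show "y \<in> ?rhs"
    proof
      assume "\<exists>u v z t. w = u @ v \<and> u \<in> kleene_star A \<and> v \<noteq> [] \<and> v @ z \<in> A \<and>
         t \<in> kleene_star A \<and> y = z @ t"
      then obtain u v z t where "w = u @ v" "u \<in> kleene_star A" "v \<noteq> []"
          "z \<in> left_quotient v A" "t \<in> kleene_star A" "y = z @ t"
        by (auto simp: left_quotient_def)
      then show ?thesis unfolding conc_def by blast
    qed simp
  qed
  show "?rhs \<subseteq> ?lhs"
  proof
    fix y assume "y \<in> ?rhs"
    then show "y \<in> ?lhs"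
    proof
      assume "y \<in> (if w \<in> kleene_star A then kleene_star A else {})"
      then show ?thesis by (auto simp: left_quotient_def star_append split: if_splits)
    next
      assume "y \<in> conc (\<Union>{left_quotient v A | v. v \<noteq> [] \<and> (\<exists>u\<in>kleene_star A. w = u @ v)}) (kleene_star A)"
      then obtain u v z t where "u \<in> kleene_star A" "w = u @ v" "v @ z \<in> A"
          "t \<in> kleene_star A" "y = z @ t"
        by (auto simp: conc_def left_quotient_def)
      then have "u @ ((v @ z) @ t) \<in> kleene_star A"
        by (simp add: star_append kleene_star.star_app del: append_assoc)
      then show ?thesis using \<open>w = u @ v\<close> \<open>y = z @ t\<close> by (simp add: left_quotient_def)
    qed
  qed
qed

definition left_quotients :: "'a list set \<Rightarrow> 'a list set set" where
  "left_quotients A = range (\<lambda>w. left_quotient w A)"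

lemma finite_left_quotients_lang: "finite (left_quotients (lang r))"
proof (induction r)
  case Zero
  have "left_quotients (lang Zero) \<subseteq> {{}}"
    by (auto simp: left_quotients_def left_quotient_def)
  then show ?case by (rule finite_subset) simp
next
  case One
  have "left_quotients (lang One) \<subseteq> {{}, {[]}}"
    by (auto simp: left_quotients_def left_quotient_def)
  then show ?case by (rule finite_subset) simp
next
  case (Atom a)
  have "left_quotient w {[a]} \<in> {{}, {[]}, {[a]}}" for w
    by (cases w) (auto simp: left_quotient_def)
  then have "left_quotients (lang (Atom a)) \<subseteq> {{}, {[]}, {[a]}}"
    by (auto simp: left_quotients_def)
  then show ?case by (rule finite_subset) simp
next
  case (Plus r s)
  have "left_quotients (lang (Plus r s)) \<subseteq>
      (\<lambda>(X, Y). X \<union> Y) ` (left_quotients (lang r) \<times> left_quotients (lang s))"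
    by (auto simp: left_quotients_def left_quotient_Un)
  then show ?case by (rule finite_subset) (use Plus in auto)
next
  case (Times r s)
  let ?f = "\<lambda>(X, S). conc X (lang s) \<union> \<Union>S"
  have "left_quotient w (lang (Times r s)) \<in>
      ?f ` (left_quotients (lang r) \<times> Pow (left_quotients (lang s)))" for w
    by (rule image_eqI[where x =
          "(left_quotient w (lang r), {left_quotient v (lang s) | v. \<exists>u\<in>lang r. w = u @ v})"])
      (auto simp: left_quotient_conc left_quotients_def)
  then have "left_quotients (lang (Times r s)) \<subseteq>
      ?f ` (left_quotients (lang r) \<times> Pow (left_quotients (lang s)))"
    unfolding left_quotients_def by blast
  then show ?case by (rule finite_subset) (use Times in auto)
next
  case (Star r)
  let ?K = "kleene_star (lang r)"
  let ?f = "\<lambda>(b, S). (if b then ?K else {}) \<union> conc (\<Union>S) ?K"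
  have "left_quotient w (lang (Star r)) \<in> ?f ` (UNIV \<times> Pow (left_quotients (lang r)))" for w
    by (rule image_eqI[where x = "(w \<in> ?K,
          {left_quotient v (lang r) | v. v \<noteq> [] \<and> (\<exists>u\<in>?K. w = u @ v)})"])
      (auto simp: left_quotient_star left_quotients_def)
  then have "left_quotients (lang (Star r)) \<subseteq> ?f ` (UNIV \<times> Pow (left_quotients (lang r)))"
    unfolding left_quotients_def by blast
  then show ?case by (rule finite_subset) (use Star in auto)
qed

lemma regular_finite_left_quotients: "regular L \<Longrightarrow> finite (left_quotients L)"
  using finite_left_quotients_lang unfolding regular_def by blast

text \<open>The words that fit into the context u _ v of L.  These serve as the nonterminals
  of the grammar for pssr L.\<close>

definition ctx_quotient :: "'a list \<Rightarrow> 'a list \<Rightarrow> 'a list set \<Rightarrow> 'a list set" where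
  "ctx_quotient u v L = {y. u @ y @ v \<in> L}"

definition ctx_quotients :: "'a list set \<Rightarrow> 'a list set set" where
  "ctx_quotients L = range (\<lambda>(u, v). ctx_quotient u v L)"

lemma rev_image_mem_iff: "y \<in> rev ` A \<longleftrightarrow> rev y \<in> A"
  using inj_image_mem_iff[OF inj_on_rev, of "rev y" A] by simp

lemma ctx_quotient_right: "ctx_quotient [] v L = rev ` left_quotient (rev v) (rev ` L)"
  by (auto simp: ctx_quotient_def left_quotient_def rev_image_mem_iff)

text \<open>Right quotients are reversed left quotients of the reversed language, and a
  two-sided quotient is a left quotient of a right quotient; both families are finite,
  and the left quotients of a fixed right quotient are images of the left quotients
  of L.\<close>

lemma regular_finite_ctx_quotients:
  assumes "regular L"
  shows "finite (ctx_quotients L)"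
proof -
  have fin_left: "finite (left_quotients L)" and fin_rev: "finite (left_quotients (rev ` L))"
    using regular_finite_left_quotients assms regular_rev by blast+
  let ?R = "range (\<lambda>v. ctx_quotient [] v L)"
  have "?R \<subseteq> image rev ` left_quotients (rev ` L)"
    by (auto simp: ctx_quotient_right left_quotients_def)
  then have "finite ?R" using fin_rev finite_subset by blast
  moreover have "finite (left_quotients M)" if "M \<in> ?R" for M
  proof -
    from that obtain v where "M = ctx_quotient [] v L" by blast
    then have "left_quotients M \<subseteq> ctx_quotient [] v ` left_quotients L"
      by (auto simp: left_quotients_def left_quotient_def ctx_quotient_def)
    then show ?thesis using fin_left finite_subset by blast
  qed
  moreover have "ctx_quotients L \<subseteq> (\<Union>M\<in>?R. left_quotients M)"
    by (auto simp: ctx_quotients_def left_quotients_def left_quotient_def ctx_quotient_def)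
  ultimately show ?thesis by (meson finite_UN_I finite_subset)
qed

section \<open>A grammar for pssr over a peel-closed family of languages\<close>

definition peel :: "'a \<Rightarrow> 'a \<Rightarrow> 'a list set \<Rightarrow> 'a list set" where
  "peel a b K = {y. a # y @ [b] \<in> K}"

definition peel_closed :: "'a list set set \<Rightarrow> bool" where
  "peel_closed CS \<longleftrightarrow> (\<forall>K\<in>CS. \<forall>a b. peel a b K \<in> CS)"

text \<open>Peeling a quotient widens its context by one letter on each side.\<close>

lemma peel_closed_ctx_quotients: "peel_closed (ctx_quotients L)"
proof -
  have "peel a b (ctx_quotient u v L) = ctx_quotient (u @ [a]) (b # v) L" for a b u v
    by (simp add: peel_def ctx_quotient_def)
  then show ?thesis unfolding peel_closed_def ctx_quotients_def by auto
qed

lemma mem_ctx_quotients: "L \<in> ctx_quotients L"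
proof -
  have "L = ctx_quotient [] [] L" by (simp add: ctx_quotient_def)
  then show ?thesis unfolding ctx_quotients_def by blast
qed

definition shuffle_rev :: "'a list \<Rightarrow> 'a list" where
  "shuffle_rev x = perfect_shuffle x (rev x)"

lemma pssr_eq_image: "pssr L = shuffle_rev ` L"
  by (auto simp: pssr_def shuffle_rev_def)

lemma perfect_shuffle_snoc:
  "length xs = length ys \<Longrightarrow>
    perfect_shuffle (xs @ [c]) (ys @ [d]) = perfect_shuffle xs ys @ [c, d]"
  by (induction xs ys rule: list_induct2) auto

lemma shuffle_rev_outer: "shuffle_rev (a # y @ [b]) = [a, b] @ shuffle_rev y @ [b, a]"
  by (simp add: shuffle_rev_def perfect_shuffle_snoc)

lemma derives1_ctx: "derives1 P \<alpha> \<beta> \<Longrightarrow> derives1 P (u @ \<alpha> @ v) (u @ \<beta> @ v)"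
proof (induction rule: derives1.induct)
  case (1 A \<alpha> u' v')
  from derives1.intros[OF 1, of "u @ u'" "v' @ v"] show ?case by simp
qed

lemma derives_ctx: "derives P \<alpha> \<beta> \<Longrightarrow> derives P (u @ \<alpha> @ v) (u @ \<beta> @ v)"
  unfolding derives_def
  by (induction rule: rtranclp_induct) (auto intro: derives1_ctx rtranclp.rtrancl_into_rtrancl)

lemma derives_production: "(A, \<alpha>) \<in> P \<Longrightarrow> derives P [Inl A] \<alpha>"
  using derives1.intros[of A \<alpha> P "[]" "[]"] unfolding derives_def by auto

lemma derives_trans [trans]: "derives P \<alpha> \<beta> \<Longrightarrow> derives P \<beta> \<gamma> \<Longrightarrow> derives P \<alpha> \<gamma>"
  unfolding derives_def by (rule rtranclp_trans)

definition pssr_grammar ::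
    "('a list set \<Rightarrow> nat) \<Rightarrow> 'a list set set \<Rightarrow> 'a set \<Rightarrow> 'a prod set" where
  "pssr_grammar enc CS \<Sigma> =
     {(enc K, map Inr (shuffle_rev y)) | K y. K \<in> CS \<and> y \<in> K \<and> length y \<le> 1 \<and> set y \<subseteq> \<Sigma>}
   \<union> {(enc K, [Inr a, Inr b, Inl (enc (peel a b K)), Inr b, Inr a]) | K a b.
        K \<in> CS \<and> a \<in> \<Sigma> \<and> b \<in> \<Sigma>}"

lemma finite_pssr_grammar:
  assumes "finite CS" and "finite \<Sigma>"
  shows "finite (pssr_grammar enc CS \<Sigma>)"
proof -
  let ?short = "{y. set y \<subseteq> \<Sigma> \<and> length y \<le> 1}"
  have "pssr_grammar enc CS \<Sigma> \<subseteq>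
      (\<lambda>(K, y). (enc K, map Inr (shuffle_rev y))) ` (CS \<times> ?short) \<union>
      (\<lambda>(K, a, b). (enc K, [Inr a, Inr b, Inl (enc (peel a b K)), Inr b, Inr a])) ` (CS \<times> \<Sigma> \<times> \<Sigma>)"
    (is "_ \<subseteq> ?rhs")
  proof
    fix p assume "p \<in> pssr_grammar enc CS \<Sigma>"
    then consider
        K y where "p = (enc K, map Inr (shuffle_rev y))" "(K, y) \<in> CS \<times> ?short"
      | K a b where "p = (enc K, [Inr a, Inr b, Inl (enc (peel a b K)), Inr b, Inr a])"
          "(K, a, b) \<in> CS \<times> \<Sigma> \<times> \<Sigma>"
      unfolding pssr_grammar_def by auto
    then show "p \<in> ?rhs"
    proof cases
      case (1 K y)
      then show ?thesis by (intro UnI1 image_eqI[where x = "(K, y)"]) simp_all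
    next
      case (2 K a b)
      then show ?thesis by (intro UnI2 image_eqI[where x = "(K, a, b)"]) simp_all
    qed
  qed
  moreover have "finite ?rhs"
    using assms finite_lists_length_le[OF assms(2)]
    by (intro finite_UnI finite_imageI finite_cartesian_product)
  ultimately show ?thesis by (rule finite_subset)
qed

lemma pssr_grammar_complete:
  assumes closed: "peel_closed CS"
  shows "K \<in> CS \<Longrightarrow> x \<in> K \<Longrightarrow> set x \<subseteq> \<Sigma> \<Longrightarrow>
    derives (pssr_grammar enc CS \<Sigma>) [Inl (enc K)] (map Inr (shuffle_rev x))"
proof (induction x arbitrary: K rule: length_induct)
  case (1 x)
  let ?G = "pssr_grammar enc CS \<Sigma>"
  show ?case
  proof (cases "length x \<le> 1")
    case True
    then have "(enc K, map Inr (shuffle_rev x)) \<in> ?G"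
      using "1.prems" unfolding pssr_grammar_def by blast
    then show ?thesis by (rule derives_production)
  next
    case False
    then obtain a x' where "x = a # x'" "x' \<noteq> []"
      by (cases x) auto
    then obtain y b where x: "x = a # y @ [b]"
      by (cases x' rule: rev_exhaust) auto
    have "peel a b K \<in> CS" using closed "1.prems"(1) unfolding peel_closed_def by blast
    moreover have "y \<in> peel a b K" using "1.prems"(2) x by (simp add: peel_def)
    moreover have "length y < length x" "set y \<subseteq> \<Sigma>" using "1.prems"(3) x by auto
    ultimately have inner: "derives ?G [Inl (enc (peel a b K))] (map Inr (shuffle_rev y))"
      using "1.IH" by blast
    have "(enc K, [Inr a, Inr b] @ [Inl (enc (peel a b K))] @ [Inr b, Inr a]) \<in> ?G"
      using "1.prems" x unfolding pssr_grammar_def by auto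
    then have "derives ?G [Inl (enc K)] ([Inr a, Inr b] @ [Inl (enc (peel a b K))] @ [Inr b, Inr a])"
      by (rule derives_production)
    also have "derives ?G \<dots> ([Inr a, Inr b] @ map Inr (shuffle_rev y) @ [Inr b, Inr a])"
      using inner by (rule derives_ctx)
    finally show ?thesis by (simp add: x shuffle_rev_outer)
  qed
qed

lemma Inl_split_unique:
  "u @ [Inl A] @ v = map Inr p @ [Inl B] @ map Inr s \<Longrightarrow>
    u = map Inr p \<and> A = B \<and> v = map Inr s"
proof (induction u arbitrary: p)
  case Nil
  then show ?case by (cases p) auto
next
  case (Cons c u)
  show ?case
  proof (cases p)
    case Nil
    then have "u @ [Inl A] @ v = map Inr s" using Cons.prems by simp
    then have "Inl A \<in> set (map Inr s)" by (metis Un_iff in_set_conv_decomp set_append)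
    then show ?thesis by auto
  next
    case (Cons d p')
    then show ?thesis using Cons.prems Cons.IH[of p'] by auto
  qed
qed

text \<open>The invariant of derivations from L: a sentential form is either a terminal word
  of pssr L, or has exactly one nonterminal K inside terminal context p _ s such that
  every completion of K by a word y \<in> K gives a word of pssr L.\<close>

definition pssr_form ::
    "('a list set \<Rightarrow> nat) \<Rightarrow> 'a list set set \<Rightarrow> 'a list set \<Rightarrow> (nat + 'a) list \<Rightarrow> bool" where
  "pssr_form enc CS L \<phi> \<longleftrightarrow> \<phi> \<in> map Inr ` pssr L \<or>
     (\<exists>p s K. K \<in> CS \<and> \<phi> = map Inr p @ [Inl (enc K)] @ map Inr s \<and>
        (\<forall>y\<in>K. p @ shuffle_rev y @ s \<in> pssr L))"

lemma pssr_form_step: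
  assumes inj: "inj_on enc CS" and closed: "peel_closed CS"
    and form: "pssr_form enc CS L \<phi>"
    and step: "derives1 (pssr_grammar enc CS \<Sigma>) \<phi> \<psi>"
  shows "pssr_form enc CS L \<psi>"
proof -
  from step obtain u A v \<alpha> where uv: "\<phi> = u @ [Inl A] @ v" "\<psi> = u @ \<alpha> @ v"
      and prod: "(A, \<alpha>) \<in> pssr_grammar enc CS \<Sigma>"
    by (cases rule: derives1.cases) auto
  have "Inl A \<in> set \<phi>" using uv by simp
  then have "\<phi> \<notin> map Inr ` pssr L" by auto
  with form obtain p s K where K: "K \<in> CS" and decomp: "\<phi> = map Inr p @ [Inl (enc K)] @ map Inr s"
      and good: "\<forall>y\<in>K. p @ shuffle_rev y @ s \<in> pssr L"
    unfolding pssr_form_def by blast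
  from Inl_split_unique[of u A v p "enc K" s] uv decomp
  have ctx: "u = map Inr p" "A = enc K" "v = map Inr s" by auto
  have same: "K' = K" if "K' \<in> CS" "enc K' = A" for K'
    using inj K that ctx(2) by (auto dest: inj_onD)
  from prod consider
      K' y where "K' \<in> CS" "enc K' = A" "y \<in> K'" "\<alpha> = map Inr (shuffle_rev y)"
    | K' a b where "K' \<in> CS" "enc K' = A"
        "\<alpha> = [Inr a, Inr b, Inl (enc (peel a b K'))] @ [Inr b, Inr a]"
    unfolding pssr_grammar_def by auto
  then show ?thesis
  proof cases
    case (1 K' y)
    then have "K' = K" using same by blast
    have "\<psi> = map Inr (p @ shuffle_rev y @ s)"
      using uv(2) ctx 1(4) by simp
    moreover have "p @ shuffle_rev y @ s \<in> pssr L"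
      using good 1(3) \<open>K' = K\<close> by blast
    ultimately show ?thesis unfolding pssr_form_def by blast
  next
    case (2 K' a b)
    then have "K' = K" using same by blast
    have "\<psi> = map Inr (p @ [a, b]) @ [Inl (enc (peel a b K))] @ map Inr ([b, a] @ s)"
      using uv(2) ctx 2(3) \<open>K' = K\<close> by simp
    moreover have "peel a b K \<in> CS" using closed K unfolding peel_closed_def by blast
    moreover have "(p @ [a, b]) @ shuffle_rev y @ ([b, a] @ s) \<in> pssr L" if "y \<in> peel a b K" for y
    proof -
      have "p @ shuffle_rev (a # y @ [b]) @ s \<in> pssr L"
        using good that by (simp add: peel_def)
      then show ?thesis by (simp add: shuffle_rev_outer)
    qed
    ultimately show ?thesis unfolding pssr_form_def by blast
  qed
qed

lemma pssr_grammar_sound: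
  assumes inj: "inj_on enc CS" and closed: "peel_closed CS" and L: "L \<in> CS"
    and derivation: "derives (pssr_grammar enc CS \<Sigma>) [Inl (enc L)] (map Inr w)"
  shows "w \<in> pssr L"
proof -
  have "pssr_form enc CS L [Inl (enc L)]"
    unfolding pssr_form_def using L
    by (intro disjI2 exI[of _ "[]"] exI[of _ L]) (auto simp: pssr_eq_image)
  with derivation have "pssr_form enc CS L (map Inr w)"
    unfolding derives_def by induction (auto intro: pssr_form_step[OF inj closed])
  moreover have "map Inr w \<noteq> map Inr p @ [Inl n] @ map Inr s" for p s and n :: nat
  proof
    assume "map Inr w = map Inr p @ [Inl n] @ map Inr s"
    then have "Inl n \<in> set (map Inr w :: (nat + 'a) list)" by simp
    then show False by auto
  qed
  ultimately show ?thesis unfolding pssr_form_def by (auto simp: inj_map_eq_map)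
qed

theorem pssr_context_free_if_peel_closed:
  assumes "finite CS" and "peel_closed CS" and "L \<in> CS"
    and "finite \<Sigma>" and "\<forall>x\<in>L. set x \<subseteq> \<Sigma>"
  shows "context_free (pssr L)"
proof -
  obtain enc :: "'a list set \<Rightarrow> nat" where enc: "inj_on enc CS"
    using finite_imp_inj_to_nat_seg[OF assms(1)] by blast
  let ?G = "pssr_grammar enc CS \<Sigma>"
  have "cfg_lang ?G (enc L) = pssr L"
  proof
    show "cfg_lang ?G (enc L) \<subseteq> pssr L"
      using pssr_grammar_sound[OF enc assms(2,3)] unfolding cfg_lang_def by blast
    show "pssr L \<subseteq> cfg_lang ?G (enc L)"
      using pssr_grammar_complete[OF assms(2,3)] assms(5)
      unfolding cfg_lang_def pssr_eq_image by blast
  qed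
  then show ?thesis
    unfolding context_free_def using finite_pssr_grammar[OF assms(1,4)] by blast
qed

text \<open>For regular L the two-sided quotients form such a family.\<close>

theorem mainTheorem8:
  fixes L :: "'a list set"
  assumes "regular L"
  shows "context_free (pssr L)"
  using pssr_context_free_if_peel_closed[OF regular_finite_ctx_quotients[OF assms]
      peel_closed_ctx_quotients mem_ctx_quotients regular_finite_letters[OF assms]]
  by blast

end
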